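(* Let $(L,\preceq,\bot,\top)$ be a bounded lattice with at least three elements. If $L$ has independent blocks, then $L$ can be decomposed into independent blocks.
   Context: For $k\in L$ let ${\uparrow}k=\{x\in L\mid k\preceq x\}$ and ${\downarrow}k=\{x\in L\mid x\preceq k\}$. A block of $L$ is a sublattice $K\subsetneq L$ (a proper subset) such that $K\setminus\{\bot,\top\}\neq\varnothing$ and $({\uparrow}k\cup{\downarrow}k)\setminus\{\bot,\top\}\subseteq K$ for every $k\in K\setminus\{\bot,\top\}$. Two blocks $K_1,K_2$ are independent if $K_1\cap K_2\subseteq\{\bot,\top\}$; a family of blocks is a family of independent blocks if its members are pairwise independent. $L$ is decomposed into independent blocks if there is a family of independent blocks $\{K_i\}_{i\in I}$ of $L$ with $\bigcup_{i\in I}K_i=L$. *)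

theory Defs
  imports Main
begin

text \<open>The bounded lattice L is the whole carrier (UNIV) of a type of class bounded_lattice,
  with order \<le>, bottom bot and top top.\<close>

definition up_set :: "'a::bounded_lattice \<Rightarrow> 'a set" where
  "up_set k = {x. k \<le> x}"

definition down_set :: "'a::bounded_lattice \<Rightarrow> 'a set" where
  "down_set k = {x. x \<le> k}"

definition sublattice :: "'a::bounded_lattice set \<Rightarrow> bool" where
  "sublattice K \<longleftrightarrow> (\<forall>x\<in>K. \<forall>y\<in>K. inf x y \<in> K \<and> sup x y \<in> K)"

definition is_block :: "'a::bounded_lattice set \<Rightarrow> bool" where
  "is_block K \<longleftrightarrow> sublattice K \<and> K \<subset> UNIV \<and> K - {bot, top} \<noteq> {} \<and>
     (\<forall>k \<in> K - {bot, top}. (up_set k \<union> down_set k) - {bot, top} \<subseteq> K)"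

definition independent :: "'a::bounded_lattice set \<Rightarrow> 'a set \<Rightarrow> bool" where
  "independent K1 K2 \<longleftrightarrow> K1 \<inter> K2 \<subseteq> {bot, top}"

definition family_of_independent_blocks :: "'a::bounded_lattice set set \<Rightarrow> bool" where
  "family_of_independent_blocks F \<longleftrightarrow> (\<forall>K\<in>F. is_block K) \<and>
     (\<forall>K1\<in>F. \<forall>K2\<in>F. K1 \<noteq> K2 \<longrightarrow> independent K1 K2)"

definition has_independent_blocks :: "'a::bounded_lattice itself \<Rightarrow> bool" where
  "has_independent_blocks _ \<longleftrightarrow>
     (\<exists>K1 K2 :: 'a set. is_block K1 \<and> is_block K2 \<and> independent K1 K2)"

definition decomposed_into_independent_blocks :: "'a::bounded_lattice itself \<Rightarrow> bool" where
  "decomposed_into_independent_blocks _ \<longleftrightarrow>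
     (\<exists>F :: 'a set set. family_of_independent_blocks F \<and> \<Union>F = UNIV)"

end

theory Submission
  imports Defs
begin

text \<open>Consider the comparability graph on the inner elements \<open>L - {\<bottom>, \<top>}\<close>. A block is closed
  under comparability, so it contains the whole connected component of each of its inner
  elements. Two independent blocks therefore lie in different components, so no component
  exhausts \<open>L - {\<bottom>, \<top>}\<close>; each component together with \<open>\<bottom>\<close> and \<open>\<top>\<close> is then a proper block,
  distinct components give independent blocks, and these blocks cover \<open>L\<close>.\<close>

definition inner_comparable :: "('a::bounded_lattice \<times> 'a) set" where
  "inner_comparable = {(a, b). a \<notin> {bot, top} \<and> b \<notin> {bot, top} \<and> (a \<le> b \<or> b \<le> a)}"

definition component_block :: "'a::bounded_lattice \<Rightarrow> 'a set" where
  "component_block x = inner_comparable\<^sup>* `` {x} \<union> {bot, top}"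

lemma sym_inner_comparable: "sym inner_comparable"
  unfolding inner_comparable_def sym_def by auto

lemma equiv_inner_comparable_rtrancl: "equiv UNIV (inner_comparable\<^sup>*)"
  by (simp add: equiv_def refl_rtrancl sym_rtrancl[OF sym_inner_comparable] trans_rtrancl)

lemma block_contains_inner_component:
  assumes "is_block K" and "k \<in> K - {bot, top}" and "(k, y) \<in> inner_comparable\<^sup>*"
  shows "y \<in> K"
  using assms(3)
proof (induction rule: rtrancl_induct)
  case base
  then show ?case using assms(2) by simp
next
  case (step y z)
  then have "y \<in> K - {bot, top}" "z \<in> (up_set y \<union> down_set y) - {bot, top}"
    by (auto simp: inner_comparable_def up_set_def down_set_def)
  with assms(1) show ?case
    unfolding is_block_def by (elim conjE ballE) auto
qed

lemma independent_blocks_disconnected: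
  assumes "is_block K1" and "independent K1 K2"
    and "k1 \<in> K1 - {bot, top}" and "k2 \<in> K2 - {bot, top}"
  shows "(k1, k2) \<notin> inner_comparable\<^sup>*"
proof
  assume "(k1, k2) \<in> inner_comparable\<^sup>*"
  then have "k2 \<in> K1" using block_contains_inner_component assms(1,3) by blast
  then show False using assms(2,4) unfolding independent_def by blast
qed

lemma component_block_comparable_closed:
  assumes "a \<in> component_block x - {bot, top}" and "a \<le> c \<or> c \<le> a"
  shows "c \<in> component_block x"
proof (cases "c \<in> {bot, top}")
  case False
  with assms have "(x, a) \<in> inner_comparable\<^sup>*" "(a, c) \<in> inner_comparable"
    by (auto simp: component_block_def inner_comparable_def)
  then show ?thesis by (auto simp: component_block_def intro: rtrancl_into_rtrancl)
qed (auto simp: component_block_def)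

lemma sublattice_component_block: "sublattice (component_block x)"
  unfolding sublattice_def
proof (intro ballI)
  fix a b assume a: "a \<in> component_block x" and b: "b \<in> component_block x"
  show "inf a b \<in> component_block x \<and> sup a b \<in> component_block x"
  proof (cases "a \<in> {bot, top}")
    case True
    then show ?thesis using b by (auto simp: component_block_def)
  next
    case False
    then have "a \<in> component_block x - {bot, top}" using a by blast
    from component_block_comparable_closed[OF this] show ?thesis by simp
  qed
qed

lemma is_block_component_block:
  assumes "x \<notin> {bot, top}" and "component_block x \<noteq> UNIV"
  shows "is_block (component_block x)"
proof -
  have "x \<in> component_block x - {bot, top}"
    using assms(1) by (simp add: component_block_def)
  moreover have "up_set k \<union> down_set k \<subseteq> component_block x"
    if "k \<in> component_block x - {bot, top}" for k
    using that component_block_comparable_closed by (auto simp: up_set_def down_set_def)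
  ultimately show ?thesis
    using assms(2) sublattice_component_block unfolding is_block_def by auto
qed

lemma component_block_proper:
  assumes "has_independent_blocks TYPE('a::bounded_lattice)"
  shows "component_block (x::'a) \<noteq> UNIV"
proof
  assume full: "component_block x = UNIV"
  obtain K1 K2 :: "'a set" where K: "is_block K1" "is_block K2" "independent K1 K2"
    using assms unfolding has_independent_blocks_def by blast
  then obtain k1 k2 where k: "k1 \<in> K1 - {bot, top}" "k2 \<in> K2 - {bot, top}"
    unfolding is_block_def by (elim conjE) auto
  then have "(k1, x) \<in> inner_comparable\<^sup>*" "(x, k2) \<in> inner_comparable\<^sup>*"
    using full symD[OF sym_rtrancl[OF sym_inner_comparable]] by (auto simp: component_block_def)
  then have "(k1, k2) \<in> inner_comparable\<^sup>*"
    by (rule rtrancl_trans)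
  then show False
    using independent_blocks_disconnected[OF K(1,3) k] by contradiction
qed

lemma independent_component_blocks:
  assumes "component_block x \<noteq> component_block y"
  shows "independent (component_block x) (component_block y)"
  unfolding independent_def
proof
  fix z assume z: "z \<in> component_block x \<inter> component_block y"
  show "z \<in> {bot, top}"
  proof (rule ccontr)
    assume "z \<notin> {bot, top}"
    then have "z \<in> inner_comparable\<^sup>* `` {x} \<inter> inner_comparable\<^sup>* `` {y}"
      using z by (simp add: component_block_def)
    then have "inner_comparable\<^sup>* `` {x} = inner_comparable\<^sup>* `` {y}"
      using equiv_class_nondisjoint[OF equiv_inner_comparable_rtrancl] by blast
    then show False using assms by (simp add: component_block_def)
  qed
qed

lemma Union_component_blocks:
  fixes x :: "'a::bounded_lattice"
  assumes "x \<notin> {bot, top}"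
  shows "\<Union>(component_block ` (- {bot, top :: 'a})) = UNIV"
proof (rule sym, rule UNIV_eq_I)
  fix y :: 'a
  show "y \<in> \<Union>(component_block ` (- {bot, top}))"
  proof (cases "y \<in> {bot, top}")
    case True
    then have "y \<in> component_block x" by (auto simp: component_block_def)
    with assms show ?thesis by blast
  next
    case False
    have "y \<in> component_block y" by (simp add: component_block_def)
    with False show ?thesis by blast
  qed
qed

text \<open>The hypothesis that \<open>L\<close> has three elements is implied by the existence of a block.\<close>

theorem corollary23:
  assumes "\<exists>a b c :: 'a::bounded_lattice. a \<noteq> b \<and> a \<noteq> c \<and> b \<noteq> c"
    and "has_independent_blocks TYPE('a)"
  shows "decomposed_into_independent_blocks TYPE('a)"
proof -
  define F :: "'a set set" where "F = component_block ` (- {bot, top})"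
  have "family_of_independent_blocks F"
    unfolding family_of_independent_blocks_def F_def
    by (auto intro!: is_block_component_block component_block_proper[OF assms(2)]
        independent_component_blocks)
  moreover obtain K :: "'a set" where "is_block K"
    using assms(2) unfolding has_independent_blocks_def by blast
  then have "K - {bot, top} \<noteq> {}"
    by (simp add: is_block_def)
  then obtain x :: 'a where "x \<notin> {bot, top}"
    by blast
  then have "\<Union>F = UNIV"
    unfolding F_def by (rule Union_component_blocks)
  ultimately show ?thesis
    unfolding decomposed_into_independent_blocks_def by blast
qed

end
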